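(* Let $\varphi : X \to Y$ be a morphism in $\mathscr{C}$ with cokernel $\lambda : Y\to L$. Then $\varphi$ is $\{1,4\}$-invertible if and only if $\varphi$ is regular and $\lambda^{*}\lambda : L\to L$ is invertible. In this case, for every $\psi : Y\to X$ with $\varphi\psi\varphi=\varphi$, $$[1_Y-\lambda(\lambda^{*}\lambda)^{-1}\lambda^{*}]\,\psi$$ is a $\{1,4\}$-inverse of $\varphi$.
   Context: $\mathscr{C}$ is an additive category with an involution $*$: a map on morphisms sending $\varphi : X\to Y$ to $\varphi^* : Y \to X$ such that $(\varphi^* )^*=\varphi$, $(\varphi\psi)^*=\psi^*\varphi^*$ and $(\varphi+\phi)^*=\varphi^*+\phi^*$. Composition is written left to right: for $\varphi : X\to Y$ and $\psi : Y\to Z$, $\varphi\psi : X \to Z$ means "first $\varphi$, then $\psi$". A cokernel of $\varphi : X\to Y$ is a morphism $\lambda : Y\to L$ with $\varphi\lambda=0$ such that every $\beta : Y\to M$ with $\varphi\beta=0$ factors uniquely as $\beta=\lambda\beta'$. $\varphi$ is regular if there is $\chi : Y\to X$ with $\varphi\chi\varphi=\varphi$. A $\{1,4\}$-inverse of $\varphi$ is a morphism $\chi : Y\to X$ with $\varphi\chi\varphi=\varphi$ and $(\chi\varphi)^*=\chi\varphi$. A morphism is invertible if it has a two-sided inverse. *)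

theory Defs
  imports Main
begin

text \<open>An additive category with involution, represented explicitly.
  Composition is written left to right: comp f g means first f, then g.\<close>

record ('o, 'm) icat =
  Obj  :: "'o set"
  Mor  :: "'m set"
  dom  :: "'m \<Rightarrow> 'o"
  cod  :: "'m \<Rightarrow> 'o"
  comp :: "'m \<Rightarrow> 'm \<Rightarrow> 'm"
  idm  :: "'o \<Rightarrow> 'm"
  zer  :: "'o \<Rightarrow> 'o \<Rightarrow> 'm"
  plus :: "'m \<Rightarrow> 'm \<Rightarrow> 'm"
  neg  :: "'m \<Rightarrow> 'm"
  star :: "'m \<Rightarrow> 'm"

definition hom :: "('o, 'm) icat \<Rightarrow> 'o \<Rightarrow> 'o \<Rightarrow> 'm set" where
  "hom C X Y = {f \<in> Mor C. dom C f = X \<and> cod C f = Y}"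

definition category :: "('o, 'm) icat \<Rightarrow> bool" where
  "category C \<longleftrightarrow>
     (\<forall>f \<in> Mor C. dom C f \<in> Obj C \<and> cod C f \<in> Obj C) \<and>
     (\<forall>X \<in> Obj C. idm C X \<in> hom C X X) \<and>
     (\<forall>X \<in> Obj C. \<forall>Y \<in> Obj C. \<forall>Z \<in> Obj C. \<forall>f \<in> hom C X Y. \<forall>g \<in> hom C Y Z.
        comp C f g \<in> hom C X Z) \<and>
     (\<forall>X \<in> Obj C. \<forall>Y \<in> Obj C. \<forall>f \<in> hom C X Y.
        comp C (idm C X) f = f \<and> comp C f (idm C Y) = f) \<and>
     (\<forall>W \<in> Obj C. \<forall>X \<in> Obj C. \<forall>Y \<in> Obj C. \<forall>Z \<in> Obj C.
        \<forall>f \<in> hom C W X. \<forall>g \<in> hom C X Y. \<forall>h \<in> hom C Y Z.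
        comp C (comp C f g) h = comp C f (comp C g h))"

definition preadditive :: "('o, 'm) icat \<Rightarrow> bool" where
  "preadditive C \<longleftrightarrow> category C \<and>
     (\<forall>X \<in> Obj C. \<forall>Y \<in> Obj C.
        zer C X Y \<in> hom C X Y \<and>
        (\<forall>f \<in> hom C X Y. \<forall>g \<in> hom C X Y. plus C f g \<in> hom C X Y) \<and>
        (\<forall>f \<in> hom C X Y. neg C f \<in> hom C X Y) \<and>
        (\<forall>f \<in> hom C X Y. \<forall>g \<in> hom C X Y. \<forall>h \<in> hom C X Y.
            plus C (plus C f g) h = plus C f (plus C g h)) \<and>
        (\<forall>f \<in> hom C X Y. \<forall>g \<in> hom C X Y. plus C f g = plus C g f) \<and>
        (\<forall>f \<in> hom C X Y. plus C f (zer C X Y) = f) \<and>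
        (\<forall>f \<in> hom C X Y. plus C f (neg C f) = zer C X Y)) \<and>
     (\<forall>X \<in> Obj C. \<forall>Y \<in> Obj C. \<forall>Z \<in> Obj C.
        \<forall>f \<in> hom C X Y. \<forall>g \<in> hom C X Y. \<forall>h \<in> hom C Y Z.
          comp C (plus C f g) h = plus C (comp C f h) (comp C g h)) \<and>
     (\<forall>X \<in> Obj C. \<forall>Y \<in> Obj C. \<forall>Z \<in> Obj C.
        \<forall>f \<in> hom C X Y. \<forall>g \<in> hom C Y Z. \<forall>h \<in> hom C Y Z.
          comp C f (plus C g h) = plus C (comp C f g) (comp C f h))"

definition additive :: "('o, 'm) icat \<Rightarrow> bool" where
  "additive C \<longleftrightarrow> preadditive C \<and>
     (\<exists>Z \<in> Obj C. idm C Z = zer C Z Z) \<and>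
     (\<forall>X \<in> Obj C. \<forall>Y \<in> Obj C. \<exists>B \<in> Obj C.
        \<exists>i1 \<in> hom C X B. \<exists>i2 \<in> hom C Y B. \<exists>p1 \<in> hom C B X. \<exists>p2 \<in> hom C B Y.
          comp C i1 p1 = idm C X \<and> comp C i2 p2 = idm C Y \<and>
          comp C i1 p2 = zer C X Y \<and> comp C i2 p1 = zer C Y X \<and>
          plus C (comp C p1 i1) (comp C p2 i2) = idm C B)"

definition additive_inv_category :: "('o, 'm) icat \<Rightarrow> bool" where
  "additive_inv_category C \<longleftrightarrow> additive C \<and>
     (\<forall>X \<in> Obj C. \<forall>Y \<in> Obj C. \<forall>f \<in> hom C X Y. star C f \<in> hom C Y X \<and>
        star C (star C f) = f \<and>
        (\<forall>g \<in> hom C X Y. star C (plus C f g) = plus C (star C f) (star C g))) \<and>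
     (\<forall>X \<in> Obj C. \<forall>Y \<in> Obj C. \<forall>Z \<in> Obj C. \<forall>f \<in> hom C X Y. \<forall>g \<in> hom C Y Z.
        star C (comp C f g) = comp C (star C g) (star C f))"

definition minus :: "('o, 'm) icat \<Rightarrow> 'm \<Rightarrow> 'm \<Rightarrow> 'm" where
  "minus C f g = plus C f (neg C g)"

definition is_cokernel :: "('o, 'm) icat \<Rightarrow> 'm \<Rightarrow> 'm \<Rightarrow> bool" where
  "is_cokernel C f l \<longleftrightarrow> l \<in> Mor C \<and> dom C l = cod C f \<and>
     comp C f l = zer C (dom C f) (cod C l) \<and>
     (\<forall>M \<in> Obj C. \<forall>b \<in> hom C (cod C f) M.
        comp C f b = zer C (dom C f) M \<longrightarrow> (\<exists>!b'. b' \<in> hom C (cod C l) M \<and> b = comp C l b'))"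

definition regular :: "('o, 'm) icat \<Rightarrow> 'm \<Rightarrow> bool" where
  "regular C f \<longleftrightarrow> (\<exists>x \<in> hom C (cod C f) (dom C f). comp C (comp C f x) f = f)"

definition is_14_inverse :: "('o, 'm) icat \<Rightarrow> 'm \<Rightarrow> 'm \<Rightarrow> bool" where
  "is_14_inverse C f x \<longleftrightarrow> x \<in> hom C (cod C f) (dom C f) \<and>
     comp C (comp C f x) f = f \<and> star C (comp C x f) = comp C x f"

definition is_inverse_of :: "('o, 'm) icat \<Rightarrow> 'm \<Rightarrow> 'm \<Rightarrow> bool" where
  "is_inverse_of C f g \<longleftrightarrow> g \<in> hom C (cod C f) (dom C f) \<and>
     comp C f g = idm C (dom C f) \<and> comp C g f = idm C (cod C f)"

definition invertible :: "('o, 'm) icat \<Rightarrow> 'm \<Rightarrow> bool" where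
  "invertible C f \<longleftrightarrow> f \<in> Mor C \<and> (\<exists>g. is_inverse_of C f g)"

definition inverse :: "('o, 'm) icat \<Rightarrow> 'm \<Rightarrow> 'm" where
  "inverse C f = (THE g. is_inverse_of C f g)"

end

theory Submission
  imports Defs
begin

text \<open>If \<open>\<psi>\<close> is an inner inverse of \<open>\<phi>\<close>, then \<open>\<phi>(1 - \<psi>\<phi>) = 0\<close>, so \<open>1 - \<psi>\<phi> = \<lambda>\<beta>\<close> for some
  \<open>\<beta>\<close>. When \<open>\<psi>\<phi>\<close> is moreover hermitian, \<open>\<beta>\<lambda> = 1\<close> (as \<lambda> is epi) and \<open>\<beta>\<beta>\<^sup>*\<close> inverts
  \<open>\<lambda>\<^sup>*\<lambda>\<close>. Conversely, if \<open>\<lambda>\<^sup>*\<lambda>\<close> is invertible, \<open>P = \<lambda>(\<lambda>\<^sup>*\<lambda>)\<^sup>-\<^sup>1\<lambda>\<^sup>*\<close> is a hermitian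
  endomorphism with \<open>\<phi>P = 0\<close> and \<open>P\<lambda> = \<lambda>\<close>; then \<open>(1 - P)\<psi>\<phi> = (1 - P)(1 - \<lambda>\<beta>) = 1 - P\<close>,
  which is hermitian, while \<open>\<phi>(1 - P)\<psi>\<phi> = \<phi>\<psi>\<phi> = \<phi>\<close>.\<close>

locale additive_involutive_category =
  fixes C :: "('o, 'm) icat"
  assumes additive_inv_category: "additive_inv_category C"
begin

abbreviation comp_syn (infixl "\<cdot>" 70) where "f \<cdot> g \<equiv> comp C f g"
abbreviation plus_syn (infixl "\<oplus>" 65) where "f \<oplus> g \<equiv> plus C f g"
abbreviation minus_syn (infixl "\<ominus>" 65) where "f \<ominus> g \<equiv> minus C f g"

lemmas category_axioms =
  additive_inv_category[unfolded additive_inv_category_def additive_def preadditive_def,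
    THEN conjunct1, THEN conjunct1, THEN conjunct1, unfolded category_def]
lemmas preadditive_axioms =
  additive_inv_category[unfolded additive_inv_category_def additive_def preadditive_def,
    THEN conjunct1, THEN conjunct1, THEN conjunct2]
lemmas involution_axioms =
  additive_inv_category[unfolded additive_inv_category_def, THEN conjunct2]

lemma homD: "f \<in> hom C X Y \<Longrightarrow> f \<in> Mor C \<and> dom C f = X \<and> cod C f = Y"
  unfolding hom_def by simp

lemma hom_objs: "f \<in> hom C X Y \<Longrightarrow> X \<in> Obj C \<and> Y \<in> Obj C"
  using category_axioms unfolding hom_def by auto

lemma comp_in_hom: "f \<in> hom C X Y \<Longrightarrow> g \<in> hom C Y Z \<Longrightarrow> f \<cdot> g \<in> hom C X Z"
  using category_axioms hom_objs[of f X Y] hom_objs[of g Y Z] by blast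

lemma comp_assoc:
  "f \<in> hom C W X \<Longrightarrow> g \<in> hom C X Y \<Longrightarrow> h \<in> hom C Y Z \<Longrightarrow> f \<cdot> g \<cdot> h = f \<cdot> (g \<cdot> h)"
  using category_axioms hom_objs[of f W X] hom_objs[of g X Y] hom_objs[of h Y Z] by blast

lemma id_in_hom: "X \<in> Obj C \<Longrightarrow> idm C X \<in> hom C X X"
  using category_axioms by blast

lemma comp_id_left: "f \<in> hom C X Y \<Longrightarrow> idm C X \<cdot> f = f"
  using category_axioms hom_objs[of f X Y] by blast

lemma comp_id_right: "f \<in> hom C X Y \<Longrightarrow> f \<cdot> idm C Y = f"
  using category_axioms hom_objs[of f X Y] by blast

lemma hom_group_axioms:
  assumes "X \<in> Obj C" "Y \<in> Obj C"
  shows "zer C X Y \<in> hom C X Y \<and>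
    (\<forall>f \<in> hom C X Y. \<forall>g \<in> hom C X Y. f \<oplus> g \<in> hom C X Y) \<and>
    (\<forall>f \<in> hom C X Y. neg C f \<in> hom C X Y) \<and>
    (\<forall>f \<in> hom C X Y. \<forall>g \<in> hom C X Y. \<forall>h \<in> hom C X Y. f \<oplus> g \<oplus> h = f \<oplus> (g \<oplus> h)) \<and>
    (\<forall>f \<in> hom C X Y. \<forall>g \<in> hom C X Y. f \<oplus> g = g \<oplus> f) \<and>
    (\<forall>f \<in> hom C X Y. f \<oplus> zer C X Y = f) \<and>
    (\<forall>f \<in> hom C X Y. f \<oplus> neg C f = zer C X Y)"
  using preadditive_axioms[THEN conjunct1] assms by blast

lemma zer_in_hom: "X \<in> Obj C \<Longrightarrow> Y \<in> Obj C \<Longrightarrow> zer C X Y \<in> hom C X Y"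
  using preadditive_axioms by blast

lemma plus_in_hom: "f \<in> hom C X Y \<Longrightarrow> g \<in> hom C X Y \<Longrightarrow> f \<oplus> g \<in> hom C X Y"
  using hom_group_axioms hom_objs by blast

lemma neg_in_hom: "f \<in> hom C X Y \<Longrightarrow> neg C f \<in> hom C X Y"
  using hom_group_axioms hom_objs by blast

lemma plus_assoc:
  "f \<in> hom C X Y \<Longrightarrow> g \<in> hom C X Y \<Longrightarrow> h \<in> hom C X Y \<Longrightarrow> f \<oplus> g \<oplus> h = f \<oplus> (g \<oplus> h)"
  using hom_group_axioms hom_objs by blast

lemma plus_commute: "f \<in> hom C X Y \<Longrightarrow> g \<in> hom C X Y \<Longrightarrow> f \<oplus> g = g \<oplus> f"
  using hom_group_axioms hom_objs by blast

lemma plus_zer_right: "f \<in> hom C X Y \<Longrightarrow> f \<oplus> zer C X Y = f"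
  using hom_group_axioms hom_objs by blast

lemma plus_neg_right: "f \<in> hom C X Y \<Longrightarrow> f \<oplus> neg C f = zer C X Y"
  using hom_group_axioms hom_objs by blast

lemma comp_plus_distrib_right:
  "f \<in> hom C X Y \<Longrightarrow> g \<in> hom C X Y \<Longrightarrow> h \<in> hom C Y Z \<Longrightarrow> (f \<oplus> g) \<cdot> h = f \<cdot> h \<oplus> g \<cdot> h"
  using preadditive_axioms hom_objs[of f X Y] hom_objs[of h Y Z] by blast

lemma comp_plus_distrib_left:
  "f \<in> hom C X Y \<Longrightarrow> g \<in> hom C Y Z \<Longrightarrow> h \<in> hom C Y Z \<Longrightarrow> f \<cdot> (g \<oplus> h) = f \<cdot> g \<oplus> f \<cdot> h"
  using preadditive_axioms hom_objs[of f X Y] hom_objs[of h Y Z] by blast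

lemma star_in_hom: "f \<in> hom C X Y \<Longrightarrow> star C f \<in> hom C Y X"
  using involution_axioms hom_objs[of f X Y] by blast

lemma star_star: "f \<in> hom C X Y \<Longrightarrow> star C (star C f) = f"
  using involution_axioms hom_objs[of f X Y] by blast

lemma star_plus: "f \<in> hom C X Y \<Longrightarrow> g \<in> hom C X Y \<Longrightarrow> star C (f \<oplus> g) = star C f \<oplus> star C g"
  using involution_axioms hom_objs[of f X Y] by blast

lemma star_comp: "f \<in> hom C X Y \<Longrightarrow> g \<in> hom C Y Z \<Longrightarrow> star C (f \<cdot> g) = star C g \<cdot> star C f"
  using involution_axioms hom_objs[of f X Y] hom_objs[of g Y Z] by blast

lemma plus_zer_left: "f \<in> hom C X Y \<Longrightarrow> zer C X Y \<oplus> f = f"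
  using plus_commute plus_zer_right hom_objs zer_in_hom by metis

lemma neg_unique:
  assumes a: "a \<in> hom C X Y" and b: "b \<in> hom C X Y" and ab: "a \<oplus> b = zer C X Y"
  shows "b = neg C a"
proof -
  have n: "neg C a \<in> hom C X Y" using a neg_in_hom by blast
  have "b = b \<oplus> (a \<oplus> neg C a)" using b plus_neg_right[OF a] plus_zer_right by simp
  also have "\<dots> = b \<oplus> a \<oplus> neg C a" using plus_assoc[OF b a n] by simp
  also have "\<dots> = neg C a" using ab plus_commute[OF a b] plus_zer_left[OF n] by simp
  finally show ?thesis .
qed

lemma idempotent_plus_zer:
  assumes a: "a \<in> hom C X Y" and aa: "a \<oplus> a = a"
  shows "a = zer C X Y"
proof -
  have n: "neg C a \<in> hom C X Y" using a neg_in_hom by blast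
  have "a = a \<oplus> (a \<oplus> neg C a)" using a plus_neg_right[OF a] plus_zer_right by simp
  also have "\<dots> = a \<oplus> a \<oplus> neg C a" using plus_assoc[OF a a n] by simp
  also have "\<dots> = zer C X Y" using aa plus_neg_right[OF a] by simp
  finally show ?thesis .
qed

lemma comp_zer_right:
  assumes f: "f \<in> hom C X Y" and Z: "Z \<in> Obj C"
  shows "f \<cdot> zer C Y Z = zer C X Z"
proof -
  have z: "zer C Y Z \<in> hom C Y Z" using hom_objs[OF f] Z zer_in_hom by blast
  have "f \<cdot> zer C Y Z \<oplus> f \<cdot> zer C Y Z = f \<cdot> zer C Y Z"
    using comp_plus_distrib_left[OF f z z] plus_zer_right[OF z] by simp
  then show ?thesis using idempotent_plus_zer comp_in_hom[OF f z] by blast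
qed

lemma comp_zer_left:
  assumes f: "f \<in> hom C Y Z" and X: "X \<in> Obj C"
  shows "zer C X Y \<cdot> f = zer C X Z"
proof -
  have z: "zer C X Y \<in> hom C X Y" using hom_objs[OF f] X zer_in_hom by blast
  have "zer C X Y \<cdot> f \<oplus> zer C X Y \<cdot> f = zer C X Y \<cdot> f"
    using comp_plus_distrib_right[OF z z f] plus_zer_right[OF z] by simp
  then show ?thesis using idempotent_plus_zer comp_in_hom[OF z f] by blast
qed

lemma comp_neg_right:
  assumes f: "f \<in> hom C X Y" and g: "g \<in> hom C Y Z"
  shows "f \<cdot> neg C g = neg C (f \<cdot> g)"
proof -
  have n: "neg C g \<in> hom C Y Z" using g neg_in_hom by blast
  have "f \<cdot> g \<oplus> f \<cdot> neg C g = zer C X Z"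
    using comp_plus_distrib_left[OF f g n] plus_neg_right[OF g] comp_zer_right[OF f] hom_objs[OF g]
    by simp
  then show ?thesis using neg_unique comp_in_hom[OF f g] comp_in_hom[OF f n] by blast
qed

lemma comp_neg_left:
  assumes f: "f \<in> hom C X Y" and g: "g \<in> hom C Y Z"
  shows "neg C f \<cdot> g = neg C (f \<cdot> g)"
proof -
  have n: "neg C f \<in> hom C X Y" using f neg_in_hom by blast
  have "f \<cdot> g \<oplus> neg C f \<cdot> g = zer C X Z"
    using comp_plus_distrib_right[OF f n g] plus_neg_right[OF f] comp_zer_left[OF g] hom_objs[OF f]
    by simp
  then show ?thesis using neg_unique comp_in_hom[OF f g] comp_in_hom[OF n g] by blast
qed

lemma minus_in_hom: "f \<in> hom C X Y \<Longrightarrow> g \<in> hom C X Y \<Longrightarrow> f \<ominus> g \<in> hom C X Y"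
  by (simp add: minus_def plus_in_hom neg_in_hom)

lemma comp_minus_distrib_right:
  "f \<in> hom C X Y \<Longrightarrow> g \<in> hom C X Y \<Longrightarrow> h \<in> hom C Y Z \<Longrightarrow> (f \<ominus> g) \<cdot> h = f \<cdot> h \<ominus> g \<cdot> h"
  by (simp add: minus_def comp_plus_distrib_right neg_in_hom comp_neg_left)

lemma comp_minus_distrib_left:
  "f \<in> hom C X Y \<Longrightarrow> g \<in> hom C Y Z \<Longrightarrow> h \<in> hom C Y Z \<Longrightarrow> f \<cdot> (g \<ominus> h) = f \<cdot> g \<ominus> f \<cdot> h"
  by (simp add: minus_def comp_plus_distrib_left neg_in_hom comp_neg_right)

lemma minus_self: "f \<in> hom C X Y \<Longrightarrow> f \<ominus> f = zer C X Y"
  by (simp add: minus_def plus_neg_right)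

lemma minus_zer:
  assumes f: "f \<in> hom C X Y"
  shows "f \<ominus> zer C X Y = f"
proof -
  have z: "zer C X Y \<in> hom C X Y" using hom_objs[OF f] zer_in_hom by blast
  have "neg C (zer C X Y) = zer C X Y" using neg_unique[OF z z] plus_zer_right[OF z] by simp
  then show ?thesis using plus_zer_right[OF f] unfolding minus_def by simp
qed

lemma plus_minus_cancel:
  assumes a: "a \<in> hom C X Y" and b: "b \<in> hom C X Y"
  shows "a \<oplus> (b \<ominus> a) = b"
proof -
  have n: "neg C a \<in> hom C X Y" using a neg_in_hom by blast
  have "a \<oplus> (b \<ominus> a) = a \<oplus> (neg C a \<oplus> b)" unfolding minus_def using plus_commute[OF b n] by simp
  also have "\<dots> = a \<oplus> neg C a \<oplus> b" using plus_assoc[OF a n b] by simp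
  also have "\<dots> = b" using plus_neg_right[OF a] plus_zer_left[OF b] by simp
  finally show ?thesis .
qed

lemma star_zer:
  assumes "X \<in> Obj C" "Y \<in> Obj C"
  shows "star C (zer C X Y) = zer C Y X"
proof -
  have z: "zer C X Y \<in> hom C X Y" using assms zer_in_hom by blast
  have "star C (zer C X Y) \<oplus> star C (zer C X Y) = star C (zer C X Y)"
    using star_plus[OF z z] plus_zer_right[OF z] by simp
  then show ?thesis using idempotent_plus_zer[OF star_in_hom[OF z]] by blast
qed

lemma star_neg:
  assumes f: "f \<in> hom C X Y"
  shows "star C (neg C f) = neg C (star C f)"
proof -
  have n: "neg C f \<in> hom C X Y" using f neg_in_hom by blast
  have "star C f \<oplus> star C (neg C f) = zer C Y X"
    using star_plus[OF f n] plus_neg_right[OF f] star_zer hom_objs[OF f] by simp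
  then show ?thesis using neg_unique star_in_hom[OF f] star_in_hom[OF n] by blast
qed

lemma star_minus: "f \<in> hom C X Y \<Longrightarrow> g \<in> hom C X Y \<Longrightarrow> star C (f \<ominus> g) = star C f \<ominus> star C g"
  by (simp add: minus_def star_plus neg_in_hom star_neg)

lemma star_id:
  assumes X: "X \<in> Obj C"
  shows "star C (idm C X) = idm C X"
proof -
  have i: "idm C X \<in> hom C X X" using id_in_hom[OF X] .
  have s: "star C (idm C X) \<in> hom C X X" using star_in_hom[OF i] .
  have "idm C X = star C (star C (idm C X) \<cdot> idm C X)" using star_star[OF i] comp_id_right[OF s] by simp
  also have "\<dots> = star C (idm C X)" using star_comp[OF s i] star_star[OF i] comp_id_right[OF s] by simp
  finally show ?thesis by simp
qed

lemma star_id_minus: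
  "f \<in> hom C X X \<Longrightarrow> star C f = f \<Longrightarrow> star C (idm C X \<ominus> f) = idm C X \<ominus> f"
  using star_minus id_in_hom star_id hom_objs by metis

lemma star_comp_self: "f \<in> hom C X Y \<Longrightarrow> star C (star C f \<cdot> f) = star C f \<cdot> f"
  using star_comp star_in_hom star_star by metis

lemma is_inverse_of_unique:
  assumes g1: "is_inverse_of C f g1" and g2: "is_inverse_of C f g2" and f: "f \<in> hom C X Y"
  shows "g1 = g2"
proof -
  have dc: "dom C f = X" "cod C f = Y" using homD[OF f] by auto
  have h1: "g1 \<in> hom C Y X" and h2: "g2 \<in> hom C Y X" using g1 g2 dc unfolding is_inverse_of_def by auto
  have "g1 = g1 \<cdot> (f \<cdot> g2)" using g2 dc comp_id_right[OF h1] unfolding is_inverse_of_def by simp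
  also have "\<dots> = g1 \<cdot> f \<cdot> g2" using comp_assoc[OF h1 f h2] by simp
  also have "\<dots> = g2" using g1 dc comp_id_left[OF h2] unfolding is_inverse_of_def by simp
  finally show ?thesis .
qed

lemma inverse_eqI: "is_inverse_of C f g \<Longrightarrow> f \<in> hom C X Y \<Longrightarrow> inverse C f = g"
  unfolding inverse_def using is_inverse_of_unique by blast

lemma is_inverse_of_star:
  assumes f: "f \<in> hom C X Y" and g: "is_inverse_of C f g"
  shows "is_inverse_of C (star C f) (star C g)"
proof -
  have gh: "g \<in> hom C Y X" using g homD[OF f] unfolding is_inverse_of_def by simp
  have "f \<cdot> g = idm C X" "g \<cdot> f = idm C Y" using g homD[OF f] unfolding is_inverse_of_def by auto
  then have "star C f \<cdot> star C g = idm C Y" "star C g \<cdot> star C f = idm C X"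
    using star_comp[OF gh f] star_comp[OF f gh] star_id hom_objs[OF f] by auto
  then show ?thesis unfolding is_inverse_of_def using homD[OF star_in_hom[OF f]] star_in_hom[OF gh]
    by simp
qed

lemma is_inverse_of_hermitian:
  "f \<in> hom C X X \<Longrightarrow> star C f = f \<Longrightarrow> is_inverse_of C f g \<Longrightarrow> star C g = g"
  using is_inverse_of_star is_inverse_of_unique by metis

lemma hermitian_left_inverse_invertible:
  assumes f: "f \<in> hom C X X" and g: "g \<in> hom C X X"
    and f_herm: "star C f = f" and g_herm: "star C g = g" and gf: "g \<cdot> f = idm C X"
  shows "invertible C f"
proof -
  have "f \<cdot> g = idm C X"
    using arg_cong[OF gf, of "star C"] star_comp[OF g f] f_herm g_herm star_id hom_objs[OF f] by simp
  then show ?thesis unfolding invertible_def is_inverse_of_def using homD[OF f] g gf by auto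
qed

lemma hermitian_projection:
  assumes lam: "lam \<in> hom C Y L" and g: "is_inverse_of C (star C lam \<cdot> lam) g"
  defines "P \<equiv> lam \<cdot> g \<cdot> star C lam"
  shows "P \<in> hom C Y Y" and "P \<cdot> lam = lam" and "star C P = P"
proof -
  have slam: "star C lam \<in> hom C L Y" using star_in_hom[OF lam] .
  have sl: "star C lam \<cdot> lam \<in> hom C L L" using comp_in_hom[OF slam lam] .
  have gh: "g \<in> hom C L L" and g_sl: "g \<cdot> (star C lam \<cdot> lam) = idm C L"
    using g homD[OF sl] unfolding is_inverse_of_def by auto
  have lamg: "lam \<cdot> g \<in> hom C Y L" using comp_in_hom[OF lam gh] .
  show "P \<in> hom C Y Y" unfolding P_def using comp_in_hom[OF lamg slam] .
  show "P \<cdot> lam = lam"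
    unfolding P_def using comp_assoc[OF lamg slam lam] comp_assoc[OF lam gh sl] g_sl comp_id_right[OF lam]
    by simp
  have "star C g = g" using is_inverse_of_hermitian[OF sl star_comp_self[OF lam] g] .
  then show "star C P = P"
    unfolding P_def using star_comp[OF lamg slam] star_comp[OF lam gh] star_star[OF lam]
      comp_assoc[OF lam gh slam] by simp
qed

context
  fixes \<phi> lam X Y L
  assumes coker: "is_cokernel C \<phi> lam"
    and \<phi>: "\<phi> \<in> hom C X Y" and lam: "lam \<in> hom C Y L"
begin

lemma cokernel_comp_zer: "\<phi> \<cdot> lam = zer C X L"
  using coker homD[OF \<phi>] homD[OF lam] unfolding is_cokernel_def by simp

lemma cokernel_factor:
  assumes b: "b \<in> hom C Y M" and \<phi>b: "\<phi> \<cdot> b = zer C X M"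
  shows "\<exists>b'. b' \<in> hom C L M \<and> b = lam \<cdot> b'"
  using coker homD[OF \<phi>] homD[OF lam] hom_objs[OF b] b \<phi>b unfolding is_cokernel_def by metis

lemma cokernel_epi:
  assumes a: "a \<in> hom C L M" and b: "b \<in> hom C L M" and eq: "lam \<cdot> a = lam \<cdot> b"
  shows "a = b"
proof -
  have M: "M \<in> Obj C" using hom_objs[OF b] by blast
  have "\<phi> \<cdot> (lam \<cdot> a) = zer C X M"
    using comp_assoc[OF \<phi> lam a] cokernel_comp_zer comp_zer_left[OF a] hom_objs[OF \<phi>] by simp
  then have "\<exists>!b'. b' \<in> hom C L M \<and> lam \<cdot> a = lam \<cdot> b'"
    using coker homD[OF \<phi>] homD[OF lam] M comp_in_hom[OF lam a] unfolding is_cokernel_def by metis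
  then show ?thesis using a b eq by blast
qed

lemma inner_inverse_defect_factors:
  assumes \<psi>: "\<psi> \<in> hom C Y X" and \<phi>\<psi>\<phi>: "\<phi> \<cdot> \<psi> \<cdot> \<phi> = \<phi>"
  shows "\<exists>\<beta>. \<beta> \<in> hom C L Y \<and> idm C Y \<ominus> \<psi> \<cdot> \<phi> = lam \<cdot> \<beta>"
proof (rule cokernel_factor)
  have I: "idm C Y \<in> hom C Y Y" using id_in_hom hom_objs[OF \<phi>] by blast
  show "idm C Y \<ominus> \<psi> \<cdot> \<phi> \<in> hom C Y Y" using minus_in_hom[OF I comp_in_hom[OF \<psi> \<phi>]] .
  show "\<phi> \<cdot> (idm C Y \<ominus> \<psi> \<cdot> \<phi>) = zer C X Y"
    using comp_minus_distrib_left[OF \<phi> I comp_in_hom[OF \<psi> \<phi>]] comp_id_right[OF \<phi>]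
      comp_assoc[OF \<phi> \<psi> \<phi>] \<phi>\<psi>\<phi> minus_self[OF \<phi>] by simp
qed

lemma invertible_star_comp_cokernel:
  assumes \<chi>: "is_14_inverse C \<phi> \<chi>"
  shows "invertible C (star C lam \<cdot> lam)"
proof -
  have Y: "Y \<in> Obj C" and L: "L \<in> Obj C" using hom_objs[OF lam] by auto
  have \<chi>h: "\<chi> \<in> hom C Y X" and \<phi>\<chi>\<phi>: "\<phi> \<cdot> \<chi> \<cdot> \<phi> = \<phi>" and herm: "star C (\<chi> \<cdot> \<phi>) = \<chi> \<cdot> \<phi>"
    using \<chi> homD[OF \<phi>] unfolding is_14_inverse_def by auto
  define e where "e = idm C Y \<ominus> \<chi> \<cdot> \<phi>"
  obtain \<beta> where \<beta>: "\<beta> \<in> hom C L Y" and e\<beta>: "e = lam \<cdot> \<beta>"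
    using inner_inverse_defect_factors[OF \<chi>h \<phi>\<chi>\<phi>] unfolding e_def by blast
  have s\<beta>: "star C \<beta> \<in> hom C Y L" and slam: "star C lam \<in> hom C L Y"
    using star_in_hom \<beta> lam by auto
  have e_herm: "star C e = e"
    unfolding e_def using star_id_minus comp_in_hom[OF \<chi>h \<phi>] herm by blast
  have elam: "e \<cdot> lam = lam"
    using comp_minus_distrib_right[OF id_in_hom[OF Y] comp_in_hom[OF \<chi>h \<phi>] lam] comp_id_left[OF lam]
      comp_assoc[OF \<chi>h \<phi> lam] cokernel_comp_zer comp_zer_right[OF \<chi>h L] minus_zer[OF lam]
    unfolding e_def by simp
  then have \<beta>lam: "\<beta> \<cdot> lam = idm C L"
    using cokernel_epi[OF comp_in_hom[OF \<beta> lam] id_in_hom[OF L]] comp_assoc[OF lam \<beta> lam] e\<beta>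
      comp_id_right[OF lam] by simp
  have "\<beta> \<cdot> star C \<beta> \<cdot> (star C lam \<cdot> lam) = \<beta> \<cdot> star C (lam \<cdot> \<beta>) \<cdot> lam"
    using comp_assoc[OF \<beta> s\<beta> comp_in_hom[OF slam lam]] comp_assoc[OF s\<beta> slam lam]
      comp_assoc[OF \<beta> comp_in_hom[OF s\<beta> slam] lam] star_comp[OF lam \<beta>] by simp
  also have "\<dots> = \<beta> \<cdot> (e \<cdot> lam)"
    using e\<beta>[symmetric] e_herm comp_assoc[OF \<beta> comp_in_hom[OF lam \<beta>] lam] by simp
  also have "\<dots> = \<beta> \<cdot> lam" using elam by simp
  finally have "\<beta> \<cdot> star C \<beta> \<cdot> (star C lam \<cdot> lam) = idm C L" using \<beta>lam by simp
  then show ?thesis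
    using hermitian_left_inverse_invertible[OF comp_in_hom[OF slam lam] comp_in_hom[OF \<beta> s\<beta>]]
      star_comp_self[OF lam] star_comp_self[OF s\<beta>] star_star[OF \<beta>] by simp
qed

lemma cokernel_14_inverse_formula:
  assumes \<psi>: "\<psi> \<in> hom C Y X" and \<phi>\<psi>\<phi>: "\<phi> \<cdot> \<psi> \<cdot> \<phi> = \<phi>"
    and g: "is_inverse_of C (star C lam \<cdot> lam) g"
  shows "is_14_inverse C \<phi> ((idm C Y \<ominus> lam \<cdot> g \<cdot> star C lam) \<cdot> \<psi>)"
proof -
  define P where "P = lam \<cdot> g \<cdot> star C lam"
  define Q where "Q = idm C Y \<ominus> P"
  have X: "X \<in> Obj C" and Y: "Y \<in> Obj C" using hom_objs[OF \<phi>] by auto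
  note P = hermitian_projection[OF lam g, folded P_def]
  have I: "idm C Y \<in> hom C Y Y" using id_in_hom[OF Y] .
  have Q: "Q \<in> hom C Y Y" unfolding Q_def using minus_in_hom[OF I P(1)] .
  have \<psi>\<phi>: "\<psi> \<cdot> \<phi> \<in> hom C Y Y" using comp_in_hom[OF \<psi> \<phi>] .
  have gh: "g \<in> hom C L L"
    using g homD[OF comp_in_hom[OF star_in_hom[OF lam] lam]] unfolding is_inverse_of_def by simp
  have "\<phi> \<cdot> P = \<phi> \<cdot> lam \<cdot> g \<cdot> star C lam"
    unfolding P_def using comp_assoc[OF \<phi> lam gh] comp_assoc[OF \<phi> comp_in_hom[OF lam gh] star_in_hom[OF lam]]
    by simp
  then have "\<phi> \<cdot> P = zer C X Y"
    using cokernel_comp_zer comp_zer_left[OF gh X] comp_zer_left[OF star_in_hom[OF lam] X] by simp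
  then have \<phi>Q: "\<phi> \<cdot> Q = \<phi>"
    unfolding Q_def using comp_minus_distrib_left[OF \<phi> I P(1)] comp_id_right[OF \<phi>] minus_zer[OF \<phi>] by simp
  have Qlam: "Q \<cdot> lam = zer C Y L"
    unfolding Q_def using comp_minus_distrib_right[OF I P(1) lam] comp_id_left[OF lam] P(2) minus_self[OF lam]
    by simp
  obtain \<beta> where \<beta>: "\<beta> \<in> hom C L Y" and defect: "idm C Y \<ominus> \<psi> \<cdot> \<phi> = lam \<cdot> \<beta>"
    using inner_inverse_defect_factors[OF \<psi> \<phi>\<psi>\<phi>] by blast
  have "Q = Q \<cdot> (\<psi> \<cdot> \<phi> \<oplus> (idm C Y \<ominus> \<psi> \<cdot> \<phi>))"
    using plus_minus_cancel[OF \<psi>\<phi> I] comp_id_right[OF Q] by simp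
  also have "\<dots> = Q \<cdot> (\<psi> \<cdot> \<phi>) \<oplus> Q \<cdot> lam \<cdot> \<beta>"
    using comp_plus_distrib_left[OF Q \<psi>\<phi> minus_in_hom[OF I \<psi>\<phi>]] defect comp_assoc[OF Q lam \<beta>] by simp
  also have "\<dots> = Q \<cdot> \<psi> \<cdot> \<phi>"
    using Qlam comp_zer_left[OF \<beta> Y] plus_zer_right comp_in_hom[OF Q \<psi>\<phi>] comp_assoc[OF Q \<psi> \<phi>] by simp
  finally have Q\<psi>\<phi>: "Q \<cdot> \<psi> \<cdot> \<phi> = Q" ..
  have "\<phi> \<cdot> (Q \<cdot> \<psi>) \<cdot> \<phi> = \<phi>" using comp_assoc[OF \<phi> Q \<psi>] \<phi>Q \<phi>\<psi>\<phi> by simp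
  moreover have "star C Q = Q" unfolding Q_def using star_id_minus[OF P(1,3)] .
  ultimately show ?thesis
    using homD[OF \<phi>] comp_in_hom[OF Q \<psi>] Q\<psi>\<phi> unfolding is_14_inverse_def Q_def P_def by simp
qed

end

end

theorem lemma3p2:
  fixes C :: "('o, 'm) icat"
  assumes cat: "additive_inv_category C"
    and XY: "X \<in> Obj C" "Y \<in> Obj C" "L \<in> Obj C"
    and phi: "\<phi> \<in> hom C X Y"
    and lamh: "lam \<in> hom C Y L"
    and coker: "is_cokernel C \<phi> lam"
  shows "((\<exists>\<chi>. is_14_inverse C \<phi> \<chi>) \<longleftrightarrow>
           (regular C \<phi> \<and> invertible C (comp C (star C lam) lam))) \<and>
         ((\<exists>\<chi>. is_14_inverse C \<phi> \<chi>) \<longrightarrow>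
           (\<forall>\<psi> \<in> hom C Y X. comp C (comp C \<phi> \<psi>) \<phi> = \<phi> \<longrightarrow>
             is_14_inverse C \<phi>
               (comp C (minus C (idm C Y)
                   (comp C (comp C lam (inverse C (comp C (star C lam) lam))) (star C lam)))
                 \<psi>)))"
proof -
  interpret additive_involutive_category C using cat by unfold_locales
  have sl: "star C lam \<cdot> lam \<in> hom C L L" using comp_in_hom[OF star_in_hom[OF lamh] lamh] .
  have formula: "is_14_inverse C \<phi> ((idm C Y \<ominus> lam \<cdot> inverse C (star C lam \<cdot> lam) \<cdot> star C lam) \<cdot> \<psi>)"
    if "invertible C (star C lam \<cdot> lam)" "\<psi> \<in> hom C Y X" "\<phi> \<cdot> \<psi> \<cdot> \<phi> = \<phi>" for \<psi>
    using that cokernel_14_inverse_formula[OF coker phi lamh] inverse_eqI[OF _ sl]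
    unfolding invertible_def by metis
  have "regular C \<phi>" if "is_14_inverse C \<phi> \<chi>" for \<chi>
    using that unfolding regular_def is_14_inverse_def by blast
  moreover have "\<exists>\<chi>. is_14_inverse C \<phi> \<chi>"
    if "regular C \<phi>" "invertible C (star C lam \<cdot> lam)"
    using that formula homD[OF phi] unfolding regular_def by metis
  ultimately show ?thesis
    using invertible_star_comp_cokernel[OF coker phi lamh] formula by blast
qed

end
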